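(* Let $P$ be a Markov kernel on a measurable space $(\mathsf{X},\mathcal{X})$. Suppose there exist $C\in\mathcal{X}$, $\epsilon>0$ and a probability measure $\nu$ with $P(x,\cdot)\ge\epsilon\nu(\cdot)$ for all $x\in C$, and let $Q$ be the residual kernel ($Q(x,A)=(1-\epsilon)^{-1}(P(x,A)-\epsilon\nu(A))$ if $0<\epsilon<1$, $Q=\nu$ if $\epsilon=1$). Suppose further that there exist a function $W_0:\mathsf{X}\to[1,\infty)$, a function $\phi_0\in\mathcal{C}$ and a constant $b_0$ such that $PW_0\leq W_0-\phi_0\circ W_0+b_0\mathbb{1}_C$. Let $d_0=\inf_{x\notin C}W_0(x)$. Define the kernel $\check P$ on $\mathsf{X}\times\mathsf{X}$ by $$\check P(x,x';A\times A')=P(x,A)P(x',A')\mathbb{1}_{(C\times C)^c}(x,x')+Q(x,A)Q(x',A')\mathbb{1}_{C\times C}(x,x').$$ If $\phi_0(d_0)>b_0$, then, with $W(x,x')=W_0(x)+W_0(x')-1$ and $\phi=\lambda\phi_0$ for any $\lambda$ with $0<\lambda<1-b_0/\phi_0(d_0)$, one has $\check PW(x,x')\leq W(x,x')-\phi(W(x,x'))$ for all $(x,x')\notin C\times C$, and $$\sup_{C\times C}\check PW\leq 2(1-\epsilon)^{-1}\Big\{\sup_C PW_0-\epsilon\nu(W_0)\Big\}-1.$$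
   Context: $\mathcal{C}$ is the set of functions $\phi:[1,\infty)\to\mathbb{R}^+$ that are concave and differentiable with $\phi(1)>0$, $\lim_{v\to\infty}\phi(v)=\infty$ and $\lim_{v\to\infty}\phi'(v)=0$. $\nu(W_0)=\int W_0\,d\nu$. *)

theory Defs
  imports "HOL-Probability.Probability"
begin

definition classC :: "(real \<Rightarrow> real) \<Rightarrow> bool" where
  "classC \<phi> \<longleftrightarrow>
     (\<forall>v\<ge>1. \<phi> v > 0) \<and>
     concave_on {1..} \<phi> \<and>
     (\<forall>v\<ge>1. \<phi> differentiable (at v within {1..})) \<and>
     \<phi> 1 > 0 \<and>
     filterlim \<phi> at_top at_top \<and>
     ((\<lambda>v. deriv \<phi> v) \<longlongrightarrow> 0) at_top"

text \<open>Residual kernel Q: Q(x,A) = (P(x,A) - eps nu(A)) / (1 - eps) if eps < 1, and Q = nu if eps = 1.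
  (Only meaningful, and only used, for x in the small set C.)\<close>
definition residual ::
  "'a measure \<Rightarrow> ('a \<Rightarrow> 'a measure) \<Rightarrow> 'a measure \<Rightarrow> real \<Rightarrow> 'a \<Rightarrow> 'a measure" where
  "residual M P \<nu> \<epsilon> x =
     (if \<epsilon> = 1 then \<nu>
      else measure_of (space M) (sets M)
             (\<lambda>A. ennreal ((measure (P x) A - \<epsilon> * measure \<nu> A) / (1 - \<epsilon>))))"

definition coupling_kernel ::
  "'a measure \<Rightarrow> ('a \<Rightarrow> 'a measure) \<Rightarrow> 'a measure \<Rightarrow> real \<Rightarrow> 'a set \<Rightarrow> 'a \<times> 'a \<Rightarrow> ('a \<times> 'a) measure" where
  "coupling_kernel M P \<nu> \<epsilon> C = (\<lambda>(x, x').
     if x \<in> C \<and> x' \<in> C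
     then residual M P \<nu> \<epsilon> x \<Otimes>\<^sub>M residual M P \<nu> \<epsilon> x'
     else P x \<Otimes>\<^sub>M P x')"

end

theory Submission
  imports Defs
begin

(* Off C x C the coupling kernel is the product P x \<otimes> P x', so the integral of W is
   P W0 (x) + P W0 (x') - 1 and the drifts of both coordinates add up.  Concavity of phi0
   with phi0 1 > 0 gives phi0 (a + b - 1) \<le> phi0 a + phi0 b, which merges the two decrements
   into one decrement of W; at least one coordinate lies outside C, where phi0 (W0) \<ge> phi0 d0,
   and the share (1 - lam) of its decrement absorbs b0.  On C x C the kernel is Q x \<otimes> Q x', and
   P = (1 - eps) Q + eps nu on C bounds Q W0 by (sup_C P W0 - eps nu(W0)) / (1 - eps). *)

lemma concave_on_subset: "concave_on T f \<Longrightarrow> S \<subseteq> T \<Longrightarrow> convex S \<Longrightarrow> concave_on S f"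
  unfolding concave_on_def by (rule convex_on_subset)

lemma concave_on_mono_at_top:
  fixes f :: "real \<Rightarrow> real"
  assumes concave: "concave_on {a..} f" and lim: "filterlim f at_top at_top"
    and "a \<le> u" "u \<le> v"
  shows "f u \<le> f v"
proof -
  have "\<forall>\<^sub>F w in at_top. v \<le> w \<and> f u \<le> f w"
    using lim by (auto simp: filterlim_at_top intro: eventually_conj eventually_ge_at_top)
  then obtain N where N: "\<And>w. N \<le> w \<Longrightarrow> v \<le> w \<and> f u \<le> f w"
    by (auto simp: eventually_at_top_linorder)
  obtain w where w: "v \<le> w" "f u \<le> f w"
    using N[of N] by blast
  have "concave_on {u..w} f"
    using \<open>a \<le> u\<close> by (auto intro: concave_on_subset[OF concave])
  then have "min (f u) (f w) \<le> f v"
    by (rule concave_on_ge_min) (use \<open>u \<le> v\<close> w in auto)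
  with w show ?thesis by simp
qed

lemma concave_on_shift_add_le:
  fixes f :: "real \<Rightarrow> real"
  assumes concave: "concave_on {c..} f" and "c \<le> u" "c \<le> v"
  shows "f (u + v - c) + f c \<le> f u + f v"
proof (cases "u + v = 2 * c")
  case True
  then have "u = c" "v = c" using assms by auto
  then show ?thesis by simp
next
  case False
  define d where "d = (u + v - c) - c"
  define s where "s = (f (u + v - c) - f c) / d"
  have "concave_on {c..u + v - c} f"
    by (auto intro: concave_on_subset[OF concave])
  then have chord: "s * (t - c) + f c \<le> f t" if "t \<in> {c..u + v - c}" for t
    unfolding s_def d_def using that by (rule concave_onD_Icc')
  have "s * (u - c) + s * (v - c) = s * d"
    by (simp add: d_def algebra_simps)
  also have "\<dots> = f (u + v - c) - f c"
    using False by (simp add: s_def d_def)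
  finally have slopes: "s * (u - c) + s * (v - c) = f (u + v - c) - f c" .
  have "s * (u - c) + f c \<le> f u" "s * (v - c) + f c \<le> f v"
    by (rule chord, use assms in auto)+
  with slopes show ?thesis
    by linarith
qed

lemma classC_pos: "classC \<phi> \<Longrightarrow> 1 \<le> v \<Longrightarrow> 0 < \<phi> v"
  by (simp add: classC_def)

lemma classC_mono: "classC \<phi> \<Longrightarrow> 1 \<le> u \<Longrightarrow> u \<le> v \<Longrightarrow> \<phi> u \<le> \<phi> v"
  unfolding classC_def using concave_on_mono_at_top by blast

lemma nn_integral_pair_measure_add:
  assumes "prob_space N1" "prob_space N2"
    and f[measurable]: "f \<in> borel_measurable N1" and g[measurable]: "g \<in> borel_measurable N2"
  shows "(\<integral>\<^sup>+ z. f (fst z) + g (snd z) \<partial>(N1 \<Otimes>\<^sub>M N2)) = (\<integral>\<^sup>+ x. f x \<partial>N1) + (\<integral>\<^sup>+ y. g y \<partial>N2)"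
proof -
  interpret N1: prob_space N1 by fact
  interpret N2: prob_space N2 by fact
  have "(\<integral>\<^sup>+ z. f (fst z) + g (snd z) \<partial>(N1 \<Otimes>\<^sub>M N2)) = (\<integral>\<^sup>+ x. \<integral>\<^sup>+ y. f x + g y \<partial>N2 \<partial>N1)"
    by (subst N2.nn_integral_fst[symmetric]) simp_all
  also have "\<dots> = (\<integral>\<^sup>+ x. f x + (\<integral>\<^sup>+ y. g y \<partial>N2) \<partial>N1)"
    by (simp add: nn_integral_add N2.emeasure_space_1)
  also have "\<dots> = (\<integral>\<^sup>+ x. f x \<partial>N1) + (\<integral>\<^sup>+ y. g y \<partial>N2)"
    by (simp add: nn_integral_add N1.emeasure_space_1)
  finally show ?thesis .
qed

lemma nn_integral_pair_measure_add_minus_one: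
  fixes W :: "'a \<Rightarrow> real"
  assumes N1: "prob_space N1" "sets N1 = sets M" and N2: "prob_space N2" "sets N2 = sets M"
    and W_meas: "W \<in> borel_measurable M" and W_ge_1: "\<forall>x\<in>space M. 1 \<le> W x"
  shows "(\<integral>\<^sup>+ z. ennreal (W (fst z) + W (snd z) - 1) \<partial>(N1 \<Otimes>\<^sub>M N2)) + 1
      = (\<integral>\<^sup>+ x. ennreal (W x) \<partial>N1) + (\<integral>\<^sup>+ y. ennreal (W y) \<partial>N2)"
proof -
  interpret N1: prob_space N1 by fact
  have space: "space N1 = space M" "space N2 = space M"
    using N1 N2 by (auto dest: sets_eq_imp_space_eq)
  have [measurable]: "W \<in> borel_measurable N1" "W \<in> borel_measurable N2"
    using W_meas N1(2) N2(2) by (simp_all cong: measurable_cong_sets)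
  have sum_split: "ennreal (W x + W y - 1) = ennreal (W x - 1) + ennreal (W y)"
    if "x \<in> space M" "y \<in> space M" for x y
    using W_ge_1 that by (subst ennreal_plus[symmetric]) (auto simp: algebra_simps)
  have "(\<integral>\<^sup>+ z. ennreal (W (fst z) + W (snd z) - 1) \<partial>(N1 \<Otimes>\<^sub>M N2))
      = (\<integral>\<^sup>+ z. ennreal (W (fst z) - 1) + ennreal (W (snd z)) \<partial>(N1 \<Otimes>\<^sub>M N2))"
    using space by (intro nn_integral_cong) (auto simp: space_pair_measure sum_split)
  also have "\<dots> = (\<integral>\<^sup>+ x. ennreal (W x - 1) \<partial>N1) + (\<integral>\<^sup>+ y. ennreal (W y) \<partial>N2)"
    by (rule nn_integral_pair_measure_add[OF N1(1) N2(1)]) simp_all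
  moreover have "(\<integral>\<^sup>+ x. ennreal (W x - 1) \<partial>N1) + 1 = (\<integral>\<^sup>+ x. ennreal (W x) \<partial>N1)"
  proof -
    have "(\<integral>\<^sup>+ x. ennreal (W x - 1) \<partial>N1) + 1 = (\<integral>\<^sup>+ x. ennreal (W x - 1) + 1 \<partial>N1)"
      by (simp add: nn_integral_add N1.emeasure_space_1)
    also have "\<dots> = (\<integral>\<^sup>+ x. ennreal (W x) \<partial>N1)"
      using W_ge_1 space by (intro nn_integral_cong) (auto simp: ennreal_plus_if simp flip: ennreal_1)
    finally show ?thesis .
  qed
  ultimately show ?thesis by (simp add: algebra_simps)
qed

lemma nn_integral_mixture:
  fixes a b :: ennreal
  assumes sets: "sets N1 = sets N" "sets N2 = sets N"
    and mix: "\<And>A. A \<in> sets N \<Longrightarrow> emeasure N A = a * emeasure N1 A + b * emeasure N2 A"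
    and f: "f \<in> borel_measurable N"
  shows "integral\<^sup>N N f = a * integral\<^sup>N N1 f + b * integral\<^sup>N N2 f"
  using f
proof induct
  case (cong f g)
  have "integral\<^sup>N K f = integral\<^sup>N K g" if "sets K = sets N" for K
    using cong(3) sets_eq_imp_space_eq[OF that] by (auto intro: nn_integral_cong)
  with cong(4) sets show ?case
    by simp
next
  case (set A)
  then show ?case
    using sets mix by simp
next
  case (mult u c)
  then have "u \<in> borel_measurable N1" "u \<in> borel_measurable N2"
    using sets by (simp_all cong: measurable_cong_sets)
  with mult show ?case
    by (simp add: nn_integral_cmult algebra_simps)
next
  case (add u v)
  then have "u \<in> borel_measurable N1" "u \<in> borel_measurable N2"
    "v \<in> borel_measurable N1" "v \<in> borel_measurable N2"
    using sets by (simp_all cong: measurable_cong_sets)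
  with add show ?case
    by (simp add: nn_integral_add algebra_simps)
next
  case (seq U)
  have meas: "U i \<in> borel_measurable K" if "sets K = sets N" for K i
    using seq(1) that by (simp cong: measurable_cong_sets)
  have SUP_integral: "integral\<^sup>N K (SUP i. U i) = (SUP i. integral\<^sup>N K (U i))"
    if "sets K = sets N" for K
    using nn_integral_monotone_convergence_SUP[OF seq(4) meas[OF that]]
    by (simp add: SUP_apply[abs_def])
  have inc: "incseq (\<lambda>i. c * integral\<^sup>N K (U i))" for c :: ennreal and K
    using seq(4) by (auto simp: incseq_def le_fun_def intro!: mult_left_mono nn_integral_mono)
  have "(SUP i. integral\<^sup>N N (U i)) = (SUP i. a * integral\<^sup>N N1 (U i) + b * integral\<^sup>N N2 (U i))"
    using seq(3) by simp
  also have "\<dots> = a * (SUP i. integral\<^sup>N N1 (U i)) + b * (SUP i. integral\<^sup>N N2 (U i))"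
    by (simp add: ennreal_SUP_add[OF inc inc] SUP_mult_left_ennreal)
  finally show ?case
    by (simp only: SUP_integral[OF refl] SUP_integral[OF sets(1)] SUP_integral[OF sets(2)])
qed

lemma measure_le_of_emeasure_le:
  assumes "prob_space N1" "prob_space N2" "0 \<le> \<epsilon>"
    and "ennreal \<epsilon> * emeasure N2 A \<le> emeasure N1 A"
  shows "\<epsilon> * measure N2 A \<le> measure N1 A"
proof -
  interpret N1: prob_space N1 by fact
  interpret N2: prob_space N2 by fact
  show ?thesis
    using assms(3,4) by (simp add: N1.emeasure_eq_measure N2.emeasure_eq_measure ennreal_mult[symmetric])
qed

lemma sets_residual: "sets \<nu> = sets M \<Longrightarrow> sets (residual M P \<nu> \<epsilon> x) = sets M"
  by (simp add: residual_def sets.sigma_sets_eq sets.space_closed)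

lemma emeasure_residual:
  assumes Px: "prob_space (P x)" "sets (P x) = sets M"
    and \<nu>: "prob_space \<nu>" "sets \<nu> = sets M"
    and \<epsilon>: "0 \<le> \<epsilon>" "\<epsilon> < 1"
    and minor: "\<forall>A\<in>sets M. ennreal \<epsilon> * emeasure \<nu> A \<le> emeasure (P x) A"
    and A: "A \<in> sets M"
  shows "emeasure (residual M P \<nu> \<epsilon> x) A
    = ennreal ((measure (P x) A - \<epsilon> * measure \<nu> A) / (1 - \<epsilon>))"
proof -
  interpret Px: prob_space "P x" by fact
  interpret \<nu>: prob_space \<nu> by fact
  define \<mu> where "\<mu> = (\<lambda>A. ennreal ((measure (P x) A - \<epsilon> * measure \<nu> A) / (1 - \<epsilon>)))"
  have minor_real: "\<epsilon> * measure \<nu> A \<le> measure (P x) A" if "A \<in> sets M" for A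
    using minor that \<epsilon> by (intro measure_le_of_emeasure_le[OF Px(1) \<nu>(1)]) auto
  have "countably_additive (sets M) \<mu>"
  proof (rule countably_additiveI)
    fix A :: "nat \<Rightarrow> _" assume A: "range A \<subseteq> sets M" "disjoint_family A"
    define r where "r = (\<lambda>i. (measure (P x) (A i) - \<epsilon> * measure \<nu> (A i)) / (1 - \<epsilon>))"
    have "(\<lambda>i. measure (P x) (A i)) sums measure (P x) (\<Union>i. A i)"
      "(\<lambda>i. measure \<nu> (A i)) sums measure \<nu> (\<Union>i. A i)"
      using A Px(2) \<nu>(2) by (auto intro!: measure_UNION simp: Px.emeasure_finite \<nu>.emeasure_finite)
    then have "r sums ((measure (P x) (\<Union>i. A i) - \<epsilon> * measure \<nu> (\<Union>i. A i)) / (1 - \<epsilon>))"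
      unfolding r_def by (intro sums_divide sums_diff sums_mult)
    moreover have "0 \<le> r i" for i
      using minor_real[of "A i"] A \<epsilon> by (auto simp: r_def)
    ultimately have "(\<Sum>i. ennreal (r i))
        = ennreal ((measure (P x) (\<Union>i. A i) - \<epsilon> * measure \<nu> (\<Union>i. A i)) / (1 - \<epsilon>))"
      by (simp add: suminf_ennreal2 sums_summable sums_unique[symmetric])
    then show "(\<Sum>i. \<mu> (A i)) = \<mu> (\<Union>i. A i)"
      by (simp add: \<mu>_def r_def)
  qed
  moreover have "positive (sets M) \<mu>"
    by (simp add: positive_def \<mu>_def)
  moreover have "residual M P \<nu> \<epsilon> x = measure_of (space M) (sets M) \<mu>"
    using \<epsilon> by (simp add: residual_def \<mu>_def)
  ultimately show ?thesis
    using A by (simp add: emeasure_measure_of_sigma sets.sigma_algebra_axioms \<mu>_def)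
qed

lemma
  assumes Px: "prob_space (P x)" "sets (P x) = sets M"
    and \<nu>: "prob_space \<nu>" "sets \<nu> = sets M"
    and \<epsilon>: "0 \<le> \<epsilon>" "\<epsilon> < 1"
    and minor: "\<forall>A\<in>sets M. ennreal \<epsilon> * emeasure \<nu> A \<le> emeasure (P x) A"
  shows prob_space_residual: "prob_space (residual M P \<nu> \<epsilon> x)"
    and emeasure_residual_decomposition: "\<And>A. A \<in> sets M \<Longrightarrow> emeasure (P x) A
      = ennreal (1 - \<epsilon>) * emeasure (residual M P \<nu> \<epsilon> x) A + ennreal \<epsilon> * emeasure \<nu> A"
proof -
  interpret Px: prob_space "P x" by fact
  interpret \<nu>: prob_space \<nu> by fact
  note emeasure_Q = emeasure_residual[where P=P and x=x, OF assms]
  have "space (residual M P \<nu> \<epsilon> x) = space M"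
    using sets_eq_imp_space_eq[OF sets_residual[OF \<nu>(2)]] .
  moreover have "space (P x) = space M" "space \<nu> = space M"
    using Px(2) \<nu>(2) by (auto dest: sets_eq_imp_space_eq)
  ultimately show "prob_space (residual M P \<nu> \<epsilon> x)"
    using \<epsilon> Px.prob_space \<nu>.prob_space
    by (intro prob_spaceI) (simp add: emeasure_Q)
  fix A assume A: "A \<in> sets M"
  have "\<epsilon> * measure \<nu> A \<le> measure (P x) A"
    using minor A \<epsilon> by (intro measure_le_of_emeasure_le[OF Px(1) \<nu>(1)]) auto
  then have "ennreal (1 - \<epsilon>) * emeasure (residual M P \<nu> \<epsilon> x) A + ennreal \<epsilon> * emeasure \<nu> A
      = ennreal (measure (P x) A - \<epsilon> * measure \<nu> A) + ennreal (\<epsilon> * measure \<nu> A)"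
    using \<epsilon> by (simp add: emeasure_Q[OF A] \<nu>.emeasure_eq_measure ennreal_mult[symmetric])
  also have "\<dots> = emeasure (P x) A"
    using \<open>\<epsilon> * measure \<nu> A \<le> measure (P x) A\<close> \<epsilon>
    by (subst ennreal_plus[symmetric]) (auto simp: Px.emeasure_eq_measure)
  finally show "emeasure (P x) A
      = ennreal (1 - \<epsilon>) * emeasure (residual M P \<nu> \<epsilon> x) A + ennreal \<epsilon> * emeasure \<nu> A" ..
qed

lemma prob_algebra_kernelD:
  assumes "P \<in> M \<rightarrow>\<^sub>M prob_algebra N" "x \<in> space M"
  shows "prob_space (P x)" "sets (P x) = sets N"
  using measurable_space[OF assms] by (auto simp: space_prob_algebra)

lemma kernel_nn_integral_ge_const:
  assumes kernel: "P \<in> M \<rightarrow>\<^sub>M prob_algebra M" and x: "x \<in> space M"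
    and "\<forall>y\<in>space M. c \<le> W y"
  shows "ennreal c \<le> (\<integral>\<^sup>+ y. ennreal (W y) \<partial>P x)"
proof -
  interpret prob_space "P x"
    using prob_algebra_kernelD[OF kernel x] by simp
  have "space (P x) = space M"
    using prob_algebra_kernelD[OF kernel x] by (auto dest: sets_eq_imp_space_eq)
  with assms(3) show ?thesis
    by (intro nn_integral_ge_const AE_I2) (auto intro: ennreal_leI)
qed

lemma drift_constant_nonneg:
  fixes W f :: "'a \<Rightarrow> real"
  assumes kernel: "P \<in> M \<rightarrow>\<^sub>M prob_algebra M" and nonempty: "space M \<noteq> {}"
    and W_ge_1: "\<forall>x\<in>space M. 1 \<le> W x"
    and rate: "\<forall>x\<in>space M. c \<le> f x" "0 < c"
    and drift: "\<forall>x\<in>space M. (\<integral>\<^sup>+ y. ennreal (W y) \<partial>P x) \<le> ennreal (W x - f x + b * indicator C x)"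
  shows "0 \<le> b"
proof (rule ccontr)
  assume "\<not> 0 \<le> b"
  define s where "s = Inf (W ` space M)"
  have "bdd_below (W ` space M)"
    using W_ge_1 by (auto intro: bdd_belowI)
  then have s_le: "s \<le> W x" if "x \<in> space M" for x
    using that by (auto simp: s_def intro: cInf_lower)
  have "1 \<le> s"
    using nonempty W_ge_1 by (auto simp: s_def intro: cInf_greatest)
  have "s + c \<le> W x" if x: "x \<in> space M" for x
  proof -
    have "ennreal s \<le> (\<integral>\<^sup>+ y. ennreal (W y) \<partial>P x)"
      using s_le by (intro kernel_nn_integral_ge_const[OF kernel x]) blast
    also have "\<dots> \<le> ennreal (W x - f x + b * indicator C x)"
      using drift x by blast
    also have "\<dots> \<le> ennreal (W x - c)"
      using rate x \<open>\<not> 0 \<le> b\<close> by (intro ennreal_leI) (auto simp: indicator_def)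
    finally show ?thesis
      using \<open>1 \<le> s\<close> by (auto simp: ennreal_le_iff2)
  qed
  then have "s + c \<le> Inf (W ` space M)"
    using nonempty by (intro cInf_greatest) auto
  with \<open>0 < c\<close> show False
    by (simp add: s_def)
qed

lemma product_kernel_drift:
  fixes W :: "'a \<Rightarrow> real" and \<phi> :: "real \<Rightarrow> real" and \<beta> :: "'a \<Rightarrow> real"
  assumes kernel: "P \<in> M \<rightarrow>\<^sub>M prob_algebra M"
    and W_meas: "W \<in> borel_measurable M" and W_ge_1: "\<forall>x\<in>space M. 1 \<le> W x"
    and concave: "concave_on {1..} \<phi>" and "0 \<le> \<phi> 1"
    and drift: "\<forall>x\<in>space M. (\<integral>\<^sup>+ y. ennreal (W y) \<partial>P x) \<le> ennreal (W x - \<phi> (W x) + \<beta> x)"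
    and x: "x \<in> space M" and x': "x' \<in> space M"
    and "0 \<le> lam" and slack: "\<beta> x + \<beta> x' \<le> (1 - lam) * (\<phi> (W x) + \<phi> (W x'))"
  shows "(\<integral>\<^sup>+ z. ennreal (W (fst z) + W (snd z) - 1) \<partial>(P x \<Otimes>\<^sub>M P x'))
    \<le> ennreal ((W x + W x' - 1) - lam * \<phi> (W x + W x' - 1))"
proof -
  define r where "r y = W y - \<phi> (W y) + \<beta> y" for y
  define R where "R = (W x + W x' - 1) - lam * \<phi> (W x + W x' - 1)"
  have r_ge_1: "1 \<le> r y" if y: "y \<in> space M" for y
  proof -
    have "ennreal 1 \<le> (\<integral>\<^sup>+ u. ennreal (W u) \<partial>P y)"
      using kernel_nn_integral_ge_const[OF kernel y W_ge_1] .
    also have "\<dots> \<le> ennreal (r y)"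
      using drift y by (simp add: r_def)
    finally show ?thesis
      by (simp add: ennreal_le_iff2)
  qed
  have "\<phi> (W x + W x' - 1) \<le> \<phi> (W x) + \<phi> (W x')"
    using concave_on_shift_add_le[OF concave, of "W x" "W x'"] W_ge_1 x x' \<open>0 \<le> \<phi> 1\<close> by simp
  then have "lam * \<phi> (W x + W x' - 1) \<le> lam * (\<phi> (W x) + \<phi> (W x'))"
    using \<open>0 \<le> lam\<close> by (rule mult_left_mono)
  with slack have "r x + r x' \<le> R + 1"
    by (simp add: r_def R_def algebra_simps)
  have "(\<integral>\<^sup>+ z. ennreal (W (fst z) + W (snd z) - 1) \<partial>(P x \<Otimes>\<^sub>M P x')) + 1
      = (\<integral>\<^sup>+ u. ennreal (W u) \<partial>P x) + (\<integral>\<^sup>+ u. ennreal (W u) \<partial>P x')"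
    using prob_algebra_kernelD[OF kernel x] prob_algebra_kernelD[OF kernel x'] W_meas W_ge_1
    by (intro nn_integral_pair_measure_add_minus_one)
  also have "\<dots> \<le> ennreal (r x) + ennreal (r x')"
    using drift x x' by (intro add_mono) (simp_all add: r_def)
  also have "\<dots> = ennreal (r x + r x')"
    using r_ge_1[OF x] r_ge_1[OF x'] by simp
  also have "\<dots> \<le> ennreal (R + 1)"
    using \<open>r x + r x' \<le> R + 1\<close> by (rule ennreal_leI)
  also have "\<dots> = ennreal R + 1"
    using \<open>r x + r x' \<le> R + 1\<close> r_ge_1[OF x] r_ge_1[OF x'] by simp
  finally show ?thesis
    by (simp add: R_def)
qed

lemma nn_integral_residual_decomposition:
  assumes Px: "prob_space (P x)" "sets (P x) = sets M"
    and \<nu>: "prob_space \<nu>" "sets \<nu> = sets M"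
    and \<epsilon>: "0 \<le> \<epsilon>" "\<epsilon> < 1"
    and minor: "\<forall>A\<in>sets M. ennreal \<epsilon> * emeasure \<nu> A \<le> emeasure (P x) A"
    and f: "f \<in> borel_measurable M"
  shows "(\<integral>\<^sup>+ u. f u \<partial>P x)
    = ennreal (1 - \<epsilon>) * (\<integral>\<^sup>+ u. f u \<partial>residual M P \<nu> \<epsilon> x) + ennreal \<epsilon> * (\<integral>\<^sup>+ u. f u \<partial>\<nu>)"
  using f Px(2) \<nu>(2) sets_residual[OF \<nu>(2)] emeasure_residual_decomposition[where P=P and x=x, OF assms(1-7)]
  by (intro nn_integral_mixture) (simp_all cong: measurable_cong_sets)

lemma nn_integral_residual_le:
  assumes Px: "prob_space (P x)" "sets (P x) = sets M"
    and \<nu>: "prob_space \<nu>" "sets \<nu> = sets M"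
    and \<epsilon>: "0 \<le> \<epsilon>" "\<epsilon> < 1"
    and minor: "\<forall>A\<in>sets M. ennreal \<epsilon> * emeasure \<nu> A \<le> emeasure (P x) A"
    and f: "f \<in> borel_measurable M"
    and bound: "(\<integral>\<^sup>+ u. f u \<partial>P x) \<le> S"
  shows "(\<integral>\<^sup>+ u. f u \<partial>residual M P \<nu> \<epsilon> x) \<le> ennreal (1 / (1 - \<epsilon>)) * (S - ennreal \<epsilon> * (\<integral>\<^sup>+ u. f u \<partial>\<nu>))"
proof -
  define q where "q = (\<integral>\<^sup>+ u. f u \<partial>residual M P \<nu> \<epsilon> x)"
  have "ennreal (1 - \<epsilon>) * q + ennreal \<epsilon> * (\<integral>\<^sup>+ u. f u \<partial>\<nu>) \<le> S"
    using nn_integral_residual_decomposition[where P=P and x=x, OF assms(1-8)] bound by (simp add: q_def)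
  then have "ennreal (1 - \<epsilon>) * q \<le> S - ennreal \<epsilon> * (\<integral>\<^sup>+ u. f u \<partial>\<nu>)"
    by (simp add: ennreal_le_minus_iff)
  then have "ennreal (1 / (1 - \<epsilon>)) * (ennreal (1 - \<epsilon>) * q)
      \<le> ennreal (1 / (1 - \<epsilon>)) * (S - ennreal \<epsilon> * (\<integral>\<^sup>+ u. f u \<partial>\<nu>))"
    by (rule mult_left_mono) simp
  moreover have "ennreal (1 / (1 - \<epsilon>)) * (ennreal (1 - \<epsilon>) * q) = q"
    using \<epsilon> by (simp add: mult.assoc[symmetric] ennreal_mult[symmetric])
  ultimately show ?thesis
    by (simp add: q_def)
qed

lemma drift_slack_off_small_set:
  fixes W :: "'a \<Rightarrow> real"
  assumes \<phi>: "classC \<phi>" and W_ge_1: "\<forall>x\<in>space M. 1 \<le> W x" and "0 \<le> b"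
    and x: "x \<in> space M" and x': "x' \<in> space M" and off: "(x, x') \<notin> C \<times> C"
    and lam_lt: "lam < 1 - b / \<phi> (Inf (W ` (space M - C)))"
  shows "b * indicator C x + b * indicator C x' \<le> (1 - lam) * (\<phi> (W x) + \<phi> (W x'))"
proof -
  define d where "d = Inf (W ` (space M - C))"
  obtain y where y: "y \<in> {x, x'}" "y \<notin> C"
    using off by auto
  have "bdd_below (W ` (space M - C))"
    using W_ge_1 by (auto intro: bdd_belowI)
  then have "d \<le> W y"
    using x x' y by (auto simp: d_def intro: cInf_lower)
  moreover have "1 \<le> d"
    using x x' y W_ge_1 unfolding d_def by (intro cInf_greatest) auto
  ultimately have "\<phi> d \<le> \<phi> (W y)"
    using classC_mono[OF \<phi>] by blast
  have "0 < \<phi> d"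
    using \<phi> \<open>1 \<le> d\<close> by (rule classC_pos)
  then have "b < (1 - lam) * \<phi> d"
    using lam_lt by (simp add: d_def[symmetric] field_simps)
  then have "0 < (1 - lam) * \<phi> d"
    using \<open>0 \<le> b\<close> by linarith
  then have "0 < 1 - lam"
    using \<open>0 < \<phi> d\<close> by (simp add: zero_less_mult_iff)
  have "b * indicator C x + b * indicator C x' \<le> b"
    using y \<open>0 \<le> b\<close> by (auto simp: indicator_def)
  also have "\<dots> \<le> (1 - lam) * \<phi> d"
    using \<open>b < (1 - lam) * \<phi> d\<close> by simp
  also have "\<dots> \<le> (1 - lam) * \<phi> (W y)"
    using \<open>\<phi> d \<le> \<phi> (W y)\<close> \<open>0 < 1 - lam\<close> by simp
  also have "\<dots> \<le> (1 - lam) * (\<phi> (W x) + \<phi> (W x'))"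
    using classC_pos[OF \<phi>] W_ge_1 x x' y \<open>0 < 1 - lam\<close> by (auto intro!: mult_left_mono less_imp_le)
  finally show ?thesis .
qed

lemma coupling_kernel_small_set_bound:
  fixes W :: "'a \<Rightarrow> real"
  assumes kernel: "P \<in> M \<rightarrow>\<^sub>M prob_algebra M" and C_meas: "C \<in> sets M"
    and \<epsilon>: "0 \<le> \<epsilon>" "\<epsilon> < 1" and \<nu>: "prob_space \<nu>" "sets \<nu> = sets M"
    and minor: "\<forall>x\<in>C. \<forall>A\<in>sets M. ennreal \<epsilon> * emeasure \<nu> A \<le> emeasure (P x) A"
    and W_meas: "W \<in> borel_measurable M" and W_ge_1: "\<forall>x\<in>space M. 1 \<le> W x"
    and x: "x \<in> C" and x': "x' \<in> C"
  shows "(\<integral>\<^sup>+ z. ennreal (W (fst z) + W (snd z) - 1) \<partial>coupling_kernel M P \<nu> \<epsilon> C (x, x')) + 1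
    \<le> ennreal (2 / (1 - \<epsilon>)) *
        ((SUP y\<in>C. \<integral>\<^sup>+ u. ennreal (W u) \<partial>P y) - ennreal \<epsilon> * (\<integral>\<^sup>+ u. ennreal (W u) \<partial>\<nu>))"
proof -
  define B where "B = ennreal (1 / (1 - \<epsilon>)) *
    ((SUP y\<in>C. \<integral>\<^sup>+ u. ennreal (W u) \<partial>P y) - ennreal \<epsilon> * (\<integral>\<^sup>+ u. ennreal (W u) \<partial>\<nu>))"
  have Q: "prob_space (residual M P \<nu> \<epsilon> y)" "sets (residual M P \<nu> \<epsilon> y) = sets M"
    "(\<integral>\<^sup>+ u. ennreal (W u) \<partial>residual M P \<nu> \<epsilon> y) \<le> B" if y: "y \<in> C" for y
  proof -
    have Py: "prob_space (P y)" "sets (P y) = sets M"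
      using prob_algebra_kernelD[OF kernel] y sets.sets_into_space[OF C_meas] by auto
    note residual_facts = Py \<nu> \<epsilon> bspec[OF minor y]
    show "prob_space (residual M P \<nu> \<epsilon> y)"
      by (rule prob_space_residual[where P=P and x=y, OF residual_facts])
    show "sets (residual M P \<nu> \<epsilon> y) = sets M"
      by (rule sets_residual[OF \<nu>(2)])
    show "(\<integral>\<^sup>+ u. ennreal (W u) \<partial>residual M P \<nu> \<epsilon> y) \<le> B"
      unfolding B_def using W_meas y
      by (intro nn_integral_residual_le[where P=P and x=y, OF residual_facts]) (auto intro: SUP_upper)
  qed
  have "(\<integral>\<^sup>+ z. ennreal (W (fst z) + W (snd z) - 1) \<partial>coupling_kernel M P \<nu> \<epsilon> C (x, x')) + 1
      = (\<integral>\<^sup>+ u. ennreal (W u) \<partial>residual M P \<nu> \<epsilon> x) + (\<integral>\<^sup>+ u. ennreal (W u) \<partial>residual M P \<nu> \<epsilon> x')"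
    using x x' Q(1,2)[OF x] Q(1,2)[OF x'] W_meas W_ge_1
    by (simp add: coupling_kernel_def nn_integral_pair_measure_add_minus_one)
  also have "\<dots> \<le> B + B"
    using Q(3)[OF x] Q(3)[OF x'] by (rule add_mono)
  also have "\<dots> = ennreal (2 / (1 - \<epsilon>)) *
        ((SUP y\<in>C. \<integral>\<^sup>+ u. ennreal (W u) \<partial>P y) - ennreal \<epsilon> * (\<integral>\<^sup>+ u. ennreal (W u) \<partial>\<nu>))"
    using \<epsilon> by (simp add: B_def distrib_right[symmetric] ennreal_plus[symmetric] del: ennreal_plus)
  finally show ?thesis .
qed

theorem theorem3:
  fixes M :: "'a measure" and P :: "'a \<Rightarrow> 'a measure" and \<nu> :: "'a measure"
    and C :: "'a set" and \<epsilon> :: real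
    and W0 :: "'a \<Rightarrow> real" and \<phi>0 :: "real \<Rightarrow> real" and b0 :: real and lam :: real
  assumes kernel: "P \<in> M \<rightarrow>\<^sub>M prob_algebra M"
    and C_meas: "C \<in> sets M"
    and eps_pos: "\<epsilon> > 0" and eps_le1: "\<epsilon> \<le> 1"
    and nu_prob: "prob_space \<nu>" and nu_sets: "sets \<nu> = sets M"
    and minor: "\<forall>x\<in>C. \<forall>A\<in>sets M. emeasure (P x) A \<ge> ennreal \<epsilon> * emeasure \<nu> A"
    and W0_meas: "W0 \<in> borel_measurable M"
    and W0_ge1: "\<forall>x\<in>space M. W0 x \<ge> 1"
    and phi0_C: "classC \<phi>0"
    and drift: "\<forall>x\<in>space M.
        (\<integral>\<^sup>+ y. ennreal (W0 y) \<partial>P x) \<le> ennreal (W0 x - \<phi>0 (W0 x) + b0 * indicator C x)"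
    and phi_d0: "\<phi>0 (Inf (W0 ` (space M - C))) > b0"
    and lam_pos: "0 < lam"
    and lam_lt: "lam < 1 - b0 / \<phi>0 (Inf (W0 ` (space M - C)))"
  shows
    "(\<forall>x\<in>space M. \<forall>x'\<in>space M. (x, x') \<notin> C \<times> C \<longrightarrow>
        (\<integral>\<^sup>+ z. ennreal (W0 (fst z) + W0 (snd z) - 1) \<partial>coupling_kernel M P \<nu> \<epsilon> C (x, x'))
          \<le> ennreal ((W0 x + W0 x' - 1) - lam * \<phi>0 (W0 x + W0 x' - 1)))
     \<and> (\<epsilon> < 1 \<longrightarrow> (\<forall>x\<in>C. \<forall>x'\<in>C.
        (\<integral>\<^sup>+ z. ennreal (W0 (fst z) + W0 (snd z) - 1) \<partial>coupling_kernel M P \<nu> \<epsilon> C (x, x')) + 1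
          \<le> ennreal (2 / (1 - \<epsilon>)) *
              ((SUP y\<in>C. \<integral>\<^sup>+ u. ennreal (W0 u) \<partial>P y) - ennreal \<epsilon> * (\<integral>\<^sup>+ u. ennreal (W0 u) \<partial>\<nu>))))"
  \<comment> \<open>phi_d0 is implied by lam_pos and lam_lt, and eps_le1 only concerns the excluded case \<open>\<epsilon> = 1\<close>.\<close>
proof -
  have off_small_set:
    "(\<integral>\<^sup>+ z. ennreal (W0 (fst z) + W0 (snd z) - 1) \<partial>coupling_kernel M P \<nu> \<epsilon> C (x, x'))
      \<le> ennreal ((W0 x + W0 x' - 1) - lam * \<phi>0 (W0 x + W0 x' - 1))"
    if x: "x \<in> space M" and x': "x' \<in> space M" and off: "(x, x') \<notin> C \<times> C" for x x'
  proof -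
    have "0 \<le> b0"
      using W0_ge1 classC_mono[OF phi0_C] classC_pos[OF phi0_C] x drift
      by (intro drift_constant_nonneg[OF kernel, where W=W0 and f="\<lambda>x. \<phi>0 (W0 x)" and c="\<phi>0 1"]) auto
    then have "b0 * indicator C x + b0 * indicator C x' \<le> (1 - lam) * (\<phi>0 (W0 x) + \<phi>0 (W0 x'))"
      by (rule drift_slack_off_small_set[OF phi0_C W0_ge1 _ x x' off lam_lt])
    moreover have "concave_on {1..} \<phi>0"
      using phi0_C by (simp add: classC_def)
    moreover have "coupling_kernel M P \<nu> \<epsilon> C (x, x') = P x \<Otimes>\<^sub>M P x'"
      using off by (auto simp: coupling_kernel_def)
    ultimately show ?thesis
      using product_kernel_drift[OF kernel W0_meas W0_ge1 _ _ drift x x'] lam_pos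
        classC_pos[OF phi0_C, of 1] by simp
  qed
  then show ?thesis
    using coupling_kernel_small_set_bound[OF kernel C_meas _ _ nu_prob nu_sets _ W0_meas W0_ge1]
      eps_pos minor by auto
qed

end
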